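(* Let $(X,d,\mu)$ be a rectifiable metric median algebra. Then $d_\mu$ is a median metric on $X$ which is invariant under every isometric automorphism of $(X,d,\mu)$, and the intrinsic median operation of $(X,d_\mu)$ coincides with $\mu$. Moreover, if $(X,d,\mu)$ is uniformly rectifiable, then $d_\mu$ is bi-Lipschitz equivalent to $d$.
   Context: A median algebra is a set $M$ with a ternary operation $\mu$ such that $\mu(x,y,z)=\mu(x,z,y)=\mu(y,z,x)$, $\mu(x,x,y)=x$ and $\mu(\mu(x,y,z),u,v)=\mu(x,\mu(y,u,v),\mu(z,u,v))$. The median interval is $I(x,y)=\{z:\mu(x,y,z)=z\}$; a subset is convex if it contains $I(a,b)$ for all its elements $a,b$; a subalgebra is a subset closed under $\mu$. A wall is a partition $M=h\sqcup h^c$ into two non-empty convex subsets; it separates $a,b$ if they lie in different parts; $\mathcal{W}(M)$ denotes the set of walls and $\mathcal{W}^M(a|b)$ the walls separating $a,b$. For a finite median algebra $M$, the edges of its associated $\mathrm{CAT}(0)$ cube complex are the pairs $\{x,y\}\subseteq M$ separated by exactly one wall of $M$. A metric median algebra $(X,d,\mu)$ is a median algebra $(X,\mu)$ with a metric $d$ for which $\mu$ is continuous; an isometric automorphism is an isometry of $(X,d)$ commuting with $\mu$. For a finite subalgebra $M\subseteq X$ and $W\in\mathcal{W}(M)$, let $\lambda^M_{\max}(W)=\max d(a,b)$ over edges $\{a,b\}$ of $M$ separated by $W$; for $x,y\in X$ set $d^M_\mu(x,y)=\sum_{W\in\mathcal{W}^M(x|y)}\lambda^M_{\max}(W)$ if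 $x,y\in M$ and $0$ otherwise, and $d_\mu(x,y)=\sup_M d^M_\mu(x,y)\in[0,\infty]$ over all finite subalgebras $M$. $(X,d,\mu)$ is rectifiable if $d_\mu(x,y)<\infty$ for all $x,y$, and uniformly rectifiable if there is $L\ge0$ with $d_\mu\le L d$. A metric $\rho$ is a median metric if for all $x_1,x_2,x_3$ the set $\bigcap_{i=1}^3\{z:\rho(x_i,z)+\rho(z,x_{i+1})=\rho(x_i,x_{i+1})\}$ (indices mod $3$) is a single point, which defines the intrinsic median operation. *)

theory Defs
  imports "HOL-Analysis.Analysis"
begin

(* The ambient set X is the whole type 'a. *)

definition median_algebra :: "('a \<Rightarrow> 'a \<Rightarrow> 'a \<Rightarrow> 'a) \<Rightarrow> bool" where
  "median_algebra \<mu> \<longleftrightarrow>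
     (\<forall>x y z. \<mu> x y z = \<mu> x z y \<and> \<mu> x y z = \<mu> y z x) \<and>
     (\<forall>x y. \<mu> x x y = x) \<and>
     (\<forall>x y z u v. \<mu> (\<mu> x y z) u v = \<mu> x (\<mu> y u v) (\<mu> z u v))"

definition median_interval :: "('a \<Rightarrow> 'a \<Rightarrow> 'a \<Rightarrow> 'a) \<Rightarrow> 'a \<Rightarrow> 'a \<Rightarrow> 'a set" where
  "median_interval \<mu> x y = {z. \<mu> x y z = z}"

definition subalgebra :: "('a \<Rightarrow> 'a \<Rightarrow> 'a \<Rightarrow> 'a) \<Rightarrow> 'a set \<Rightarrow> bool" where
  "subalgebra \<mu> M \<longleftrightarrow> (\<forall>x\<in>M. \<forall>y\<in>M. \<forall>z\<in>M. \<mu> x y z \<in> M)"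

text \<open>Convexity of C inside the median algebra M (with the restricted median):
  the median interval of M between a and b is the interval intersected with M.\<close>
definition convex_in :: "('a \<Rightarrow> 'a \<Rightarrow> 'a \<Rightarrow> 'a) \<Rightarrow> 'a set \<Rightarrow> 'a set \<Rightarrow> bool" where
  "convex_in \<mu> M C \<longleftrightarrow> C \<subseteq> M \<and> (\<forall>a\<in>C. \<forall>b\<in>C. median_interval \<mu> a b \<inter> M \<subseteq> C)"

text \<open>A wall of M is an unordered partition of M into two nonempty convex parts,
  represented as the two-element set of its halves.\<close>
definition walls :: "('a \<Rightarrow> 'a \<Rightarrow> 'a \<Rightarrow> 'a) \<Rightarrow> 'a set \<Rightarrow> 'a set set set" where
  "walls \<mu> M = {{h, M - h} | h. h \<subseteq> M \<and> h \<noteq> {} \<and> M - h \<noteq> {} \<and>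
                    convex_in \<mu> M h \<and> convex_in \<mu> M (M - h)}"

definition separates :: "'a set set \<Rightarrow> 'a \<Rightarrow> 'a \<Rightarrow> bool" where
  "separates W a b \<longleftrightarrow> (\<exists>h\<in>W. a \<in> h \<and> b \<notin> h)"

definition sep_walls :: "('a \<Rightarrow> 'a \<Rightarrow> 'a \<Rightarrow> 'a) \<Rightarrow> 'a set \<Rightarrow> 'a \<Rightarrow> 'a \<Rightarrow> 'a set set set" where
  "sep_walls \<mu> M a b = {W \<in> walls \<mu> M. separates W a b}"

text \<open>Edges of the CAT(0) cube complex of a finite median algebra M.\<close>
definition is_edge :: "('a \<Rightarrow> 'a \<Rightarrow> 'a \<Rightarrow> 'a) \<Rightarrow> 'a set \<Rightarrow> 'a \<Rightarrow> 'a \<Rightarrow> bool" where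
  "is_edge \<mu> M a b \<longleftrightarrow> a \<in> M \<and> b \<in> M \<and> card (sep_walls \<mu> M a b) = 1"

definition lambda_max ::
  "('a \<Rightarrow> 'a \<Rightarrow> real) \<Rightarrow> ('a \<Rightarrow> 'a \<Rightarrow> 'a \<Rightarrow> 'a) \<Rightarrow> 'a set \<Rightarrow> 'a set set \<Rightarrow> real" where
  "lambda_max d \<mu> M W =
     Max {d a b | a b. is_edge \<mu> M a b \<and> W \<in> sep_walls \<mu> M a b}"

definition d_mu_M ::
  "('a \<Rightarrow> 'a \<Rightarrow> real) \<Rightarrow> ('a \<Rightarrow> 'a \<Rightarrow> 'a \<Rightarrow> 'a) \<Rightarrow> 'a set \<Rightarrow> 'a \<Rightarrow> 'a \<Rightarrow> real" where
  "d_mu_M d \<mu> M x y =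
     (if x \<in> M \<and> y \<in> M then (\<Sum>W\<in>sep_walls \<mu> M x y. lambda_max d \<mu> M W) else 0)"

definition d_mu :: "('a \<Rightarrow> 'a \<Rightarrow> real) \<Rightarrow> ('a \<Rightarrow> 'a \<Rightarrow> 'a \<Rightarrow> 'a) \<Rightarrow> 'a \<Rightarrow> 'a \<Rightarrow> ereal" where
  "d_mu d \<mu> x y = (SUP M \<in> {M. finite M \<and> subalgebra \<mu> M}. ereal (d_mu_M d \<mu> M x y))"

text \<open>Metric median algebra on the whole type: d is a metric and \<mu> is continuous
  (w.r.t. the product topology on X^3, expressed by epsilon-delta).\<close>
definition metric_median_algebra ::
  "('a \<Rightarrow> 'a \<Rightarrow> real) \<Rightarrow> ('a \<Rightarrow> 'a \<Rightarrow> 'a \<Rightarrow> 'a) \<Rightarrow> bool" where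
  "metric_median_algebra d \<mu> \<longleftrightarrow>
     Metric_space UNIV d \<and> median_algebra \<mu> \<and>
     (\<forall>x y z. \<forall>e>0. \<exists>\<delta>>0. \<forall>x' y' z'.
        d x x' < \<delta> \<and> d y y' < \<delta> \<and> d z z' < \<delta> \<longrightarrow> d (\<mu> x y z) (\<mu> x' y' z') < e)"

definition rectifiable :: "('a \<Rightarrow> 'a \<Rightarrow> real) \<Rightarrow> ('a \<Rightarrow> 'a \<Rightarrow> 'a \<Rightarrow> 'a) \<Rightarrow> bool" where
  "rectifiable d \<mu> \<longleftrightarrow> (\<forall>x y. d_mu d \<mu> x y < \<infinity>)"

definition uniformly_rectifiable :: "('a \<Rightarrow> 'a \<Rightarrow> real) \<Rightarrow> ('a \<Rightarrow> 'a \<Rightarrow> 'a \<Rightarrow> 'a) \<Rightarrow> bool" where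
  "uniformly_rectifiable d \<mu> \<longleftrightarrow>
     (\<exists>L::real. L \<ge> 0 \<and> (\<forall>x y. d_mu d \<mu> x y \<le> ereal (L * d x y)))"

definition isometric_automorphism ::
  "('a \<Rightarrow> 'a \<Rightarrow> real) \<Rightarrow> ('a \<Rightarrow> 'a \<Rightarrow> 'a \<Rightarrow> 'a) \<Rightarrow> ('a \<Rightarrow> 'a) \<Rightarrow> bool" where
  "isometric_automorphism d \<mu> f \<longleftrightarrow>
     bij f \<and> (\<forall>x y. d (f x) (f y) = d x y) \<and>
     (\<forall>x y z. f (\<mu> x y z) = \<mu> (f x) (f y) (f z))"

definition geod_between :: "('a \<Rightarrow> 'a \<Rightarrow> real) \<Rightarrow> 'a \<Rightarrow> 'a \<Rightarrow> 'a \<Rightarrow> bool" where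
  "geod_between \<rho> a z b \<longleftrightarrow> \<rho> a z + \<rho> z b = \<rho> a b"

definition median_set :: "('a \<Rightarrow> 'a \<Rightarrow> real) \<Rightarrow> 'a \<Rightarrow> 'a \<Rightarrow> 'a \<Rightarrow> 'a set" where
  "median_set \<rho> x1 x2 x3 =
     {z. geod_between \<rho> x1 z x2 \<and> geod_between \<rho> x2 z x3 \<and> geod_between \<rho> x3 z x1}"

definition median_metric :: "('a \<Rightarrow> 'a \<Rightarrow> real) \<Rightarrow> bool" where
  "median_metric \<rho> \<longleftrightarrow> Metric_space UNIV \<rho> \<and>
     (\<forall>x1 x2 x3. \<exists>z. median_set \<rho> x1 x2 x3 = {z})"

definition intrinsic_median :: "('a \<Rightarrow> 'a \<Rightarrow> real) \<Rightarrow> 'a \<Rightarrow> 'a \<Rightarrow> 'a \<Rightarrow> 'a" where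
  "intrinsic_median \<rho> x1 x2 x3 = (THE z. z \<in> median_set \<rho> x1 x2 x3)"

end

theory Submission
  imports Defs
begin

text \<open>In a finite subalgebra M, every pair x, y is joined by a path of edges that stays in
  the interval I(x, y) and crosses each separating wall exactly once (induction on the size of
  intervals).  Hence d(x, y) is bounded by d^M_\<mu>(x, y), and d^M_\<mu> is additive along intervals.
  Restricting walls from a larger subalgebra M' to M shows that d^M_\<mu> increases with M; since
  finite sets generate finite subalgebras (a point of the generated subalgebra is determined by
  the traces of the halfspaces containing it, halfspaces separating points by Zorn's lemma),
  the supremum d_\<mu> stays additive: d_\<mu>(x, y) = d_\<mu>(x, c) + d_\<mu>(c, y) for c in I(x, y).
  Additivity and d \<le> d_\<mu> give the metric axioms and identify the d_\<mu>-geodesic intervals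
  with the median intervals, so the median of d_\<mu> is \<mu>.  Isometric automorphisms permute
  finite subalgebras, walls and edges, hence preserve d_\<mu>; and d_\<mu> \<le> L d gives the
  bi-Lipschitz bound with constants 1 and L + 1.\<close>

lemma inj_image: "inj f \<Longrightarrow> inj (image f)"
  using inj_on_image_Pow[of f UNIV] by simp

locale median_alg =
  fixes m :: "'a \<Rightarrow> 'a \<Rightarrow> 'a \<Rightarrow> 'a"
  assumes median_algebra: "median_algebra m"
begin

lemma med_swap23: "m x y z = m x z y"
  and med_rotate: "m x y z = m y z x"
  and med_majority: "m x x y = x"
  and med_distrib: "m (m x y z) u v = m x (m y u v) (m z u v)"
  using median_algebra unfolding median_algebra_def by blast+

lemma med_swap12: "m x y z = m y x z"
  by (metis med_swap23 med_rotate)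

lemma med_majority2: "m x y x = x"
  by (metis med_swap23 med_majority)

lemma med_majority3: "m y x x = x"
  by (metis med_rotate med_majority)

lemma median_in_interval: "m x y (m x y z) = m x y z"
  by (metis med_distrib med_majority med_majority2)

lemma interval_mono: "m a b c = c \<Longrightarrow> m a c z = z \<Longrightarrow> m a b z = z"
  by (metis med_rotate med_distrib med_majority2)

lemma interval_antisym: "m a b c = c \<Longrightarrow> m c b a = a \<Longrightarrow> a = c"
  by (metis med_swap12 med_rotate)

lemma median_unique_in_intervals:
  "m x1 x2 z = z \<Longrightarrow> m x2 x3 z = z \<Longrightarrow> m x1 x3 z = z \<Longrightarrow> z = m x1 x2 x3"
  by (smt (verit, best) med_distrib med_majority med_rotate)

lemma interval_cone_closed:
  "m c1 u w1 = w1 \<Longrightarrow> m c2 u w2 = w2 \<Longrightarrow> m w1 w2 w = w \<Longrightarrow> m (m c1 c2 w) u w = w"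
  by (smt (verit, best) med_rotate med_distrib med_majority2)

lemma interval_through_median:
  "m c1 u y = y \<Longrightarrow> m c2 v y = y \<Longrightarrow> m u v w = w \<Longrightarrow> m c1 (m c2 w y) y = y"
  by (smt (verit, best) med_rotate med_distrib med_majority2)

abbreviation med_convex :: "'a set \<Rightarrow> bool" where
  "med_convex C \<equiv> convex_in m UNIV C"

lemma med_convex_iff: "med_convex C \<longleftrightarrow> (\<forall>a\<in>C. \<forall>b\<in>C. \<forall>z. m a b z = z \<longrightarrow> z \<in> C)"
  unfolding convex_in_def median_interval_def by blast

lemma med_convex_median: "med_convex C \<Longrightarrow> a \<in> C \<Longrightarrow> b \<in> C \<Longrightarrow> m a b z \<in> C"
  unfolding med_convex_iff using median_in_interval by blast

lemma maximal_convex_avoiding: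
  assumes "x \<noteq> y"
  obtains C where "med_convex C" "x \<in> C" "y \<notin> C"
    and "\<And>K. med_convex K \<Longrightarrow> C \<subseteq> K \<Longrightarrow> y \<notin> K \<Longrightarrow> K = C"
proof -
  define F where "F = {C. med_convex C \<and> x \<in> C \<and> y \<notin> C}"
  have singleton_in_F: "{x} \<in> F"
    unfolding F_def med_convex_iff using assms med_majority by auto
  have "\<exists>U\<in>F. \<forall>X\<in>\<C>. X \<subseteq> U" if \<C>: "\<C> \<in> chains F" for \<C>
  proof (cases "\<C> = {}")
    case True
    then show ?thesis using singleton_in_F by auto
  next
    case False
    have "med_convex (\<Union>\<C>)" unfolding med_convex_iff
    proof (intro ballI allI impI)
      fix a b z assume "a \<in> \<Union>\<C>" "b \<in> \<Union>\<C>" and z: "m a b z = z"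
      then obtain A B where AB: "A \<in> \<C>" "B \<in> \<C>" "a \<in> A" "b \<in> B" by auto
      with \<C> have "A \<subseteq> B \<or> B \<subseteq> A" "med_convex A" "med_convex B"
        unfolding chains_def chain_subset_def F_def by auto
      then show "z \<in> \<Union>\<C>" using AB z unfolding med_convex_iff by blast
    qed
    then have "\<Union>\<C> \<in> F" using \<C> False unfolding chains_def F_def by auto
    then show ?thesis by auto
  qed
  from Zorn_Lemma2[OF ballI[OF this]] obtain C
    where "C \<in> F" "\<And>K. K \<in> F \<Longrightarrow> C \<subseteq> K \<Longrightarrow> K = C"
    by blast
  then show ?thesis using that unfolding F_def by blast
qed

text \<open>Each u outside C has y between u and some point of C: otherwise the union of the
  intervals from u to points of C would be a larger convex set avoiding y.\<close>
lemma complement_maximal_convex: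
  assumes conv: "med_convex C" and "x \<in> C" and yC: "y \<notin> C"
    and maximal: "\<And>K. med_convex K \<Longrightarrow> C \<subseteq> K \<Longrightarrow> y \<notin> K \<Longrightarrow> K = C"
  shows "med_convex (- C)"
proof -
  have sees_y: "\<exists>c\<in>C. m c u y = y" if u: "u \<notin> C" for u
  proof (rule ccontr)
    assume none: "\<not> (\<exists>c\<in>C. m c u y = y)"
    define K where "K = {z. \<exists>c\<in>C. m c u z = z}"
    have "med_convex K" unfolding med_convex_iff
    proof (intro ballI allI impI)
      fix a b z assume "a \<in> K" "b \<in> K" "m a b z = z"
      then show "z \<in> K"
        unfolding K_def using interval_cone_closed med_convex_median[OF conv] by blast
    qed
    moreover have "C \<subseteq> K" "u \<in> K" "y \<notin> K"
      unfolding K_def using med_majority2 med_majority3 none \<open>x \<in> C\<close> by auto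
    ultimately show False using maximal u by blast
  qed
  show ?thesis unfolding med_convex_iff
  proof (intro ballI allI impI)
    fix u v w assume u: "u \<in> - C" and v: "v \<in> - C" and w: "m u v w = w"
    show "w \<in> - C"
    proof
      assume wC: "w \<in> C"
      obtain c1 c2 where c: "c1 \<in> C" "m c1 u y = y" "c2 \<in> C" "m c2 v y = y"
        using sees_y u v by blast
      then have "m c1 (m c2 w y) y = y" "m c2 w y \<in> C"
        using interval_through_median w med_convex_median[OF conv _ wC] by auto
      then show False using conv c(1) yC unfolding med_convex_iff by blast
    qed
  qed
qed

definition halfspace :: "'a set \<Rightarrow> bool" where
  "halfspace h \<longleftrightarrow> med_convex h \<and> med_convex (- h)"

lemma halfspace_separation:
  assumes "x \<noteq> y"
  obtains h where "halfspace h" "x \<in> h" "y \<notin> h"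
  using maximal_convex_avoiding[OF assms] complement_maximal_convex that
  unfolding halfspace_def by metis

lemma halfspace_median_mem:
  assumes "halfspace h"
  shows "m x y z \<in> h \<longleftrightarrow> (x \<in> h \<and> y \<in> h) \<or> (y \<in> h \<and> z \<in> h) \<or> (x \<in> h \<and> z \<in> h)"
proof -
  have "m x y z \<in> C" if "med_convex C" "(x \<in> C \<and> y \<in> C) \<or> (y \<in> C \<and> z \<in> C) \<or> (x \<in> C \<and> z \<in> C)"
    for C
    using that med_convex_median[OF that(1)] med_swap23 med_rotate by metis
  from this[of h] this[of "- h"] assms show ?thesis unfolding halfspace_def by auto
qed

inductive_set median_hull :: "'a set \<Rightarrow> 'a set" for S where
  base: "x \<in> S \<Longrightarrow> x \<in> median_hull S"
| median: "x \<in> median_hull S \<Longrightarrow> y \<in> median_hull S \<Longrightarrow> z \<in> median_hull S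
    \<Longrightarrow> m x y z \<in> median_hull S"

lemma subset_median_hull: "S \<subseteq> median_hull S"
  using median_hull.base by blast

lemma subalgebra_median_hull: "subalgebra m (median_hull S)"
  unfolding subalgebra_def using median_hull.median by blast

lemma halfspaces_agree_on_median_hull:
  assumes "halfspace h" "halfspace h'" "h \<inter> S = h' \<inter> S" "z \<in> median_hull S"
  shows "z \<in> h \<longleftrightarrow> z \<in> h'"
  using assms(4)
proof induction
  case (base x)
  then show ?case using assms(3) by blast
next
  case (median x y z)
  then show ?case using halfspace_median_mem[OF assms(1)] halfspace_median_mem[OF assms(2)] by blast
qed

lemma finite_median_hull:
  assumes "finite S"
  shows "finite (median_hull S)"
proof -
  define trace where "trace z = {h \<inter> S | h. halfspace h \<and> z \<in> h}" for z
  have "inj_on trace (median_hull S)"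
  proof (rule inj_onI, rule ccontr)
    fix z z' assume z: "z \<in> median_hull S" and z': "z' \<in> median_hull S"
      and eq: "trace z = trace z'" and "z \<noteq> z'"
    then obtain h where h: "halfspace h" "z \<in> h" "z' \<notin> h" using halfspace_separation by metis
    then have "h \<inter> S \<in> trace z'" using eq unfolding trace_def by auto
    then obtain h' where "halfspace h'" "z' \<in> h'" "h \<inter> S = h' \<inter> S" unfolding trace_def by auto
    with halfspaces_agree_on_median_hull[OF h(1) this(1) this(3) z'] h show False by auto
  qed
  moreover have "trace ` median_hull S \<subseteq> Pow (Pow S)" unfolding trace_def by auto
  ultimately show ?thesis using assms by (meson finite_Pow_iff finite_imageD finite_subset)
qed

lemma obtain_wall_side:
  assumes "W \<in> walls m M" "a \<in> M"
  obtains k where "W = {k, M - k}" "a \<in> k" "k \<subseteq> M" "convex_in m M k" "convex_in m M (M - k)"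
proof -
  obtain h where h: "W = {h, M - h}" "h \<subseteq> M" "convex_in m M h" "convex_in m M (M - h)"
    using assms(1) unfolding walls_def by blast
  show ?thesis
  proof (cases "a \<in> h")
    case True
    then show ?thesis using that h by blast
  next
    case False
    have "M - (M - h) = h" using h(2) by blast
    then show ?thesis
      by (intro that[of "M - h"]) (use h False assms(2) in \<open>auto simp: insert_commute\<close>)
  qed
qed

lemma separates_wall_iff:
  assumes "W = {k, M - k}" "k \<subseteq> M" "p \<in> M" "q \<in> M"
  shows "separates W p q \<longleftrightarrow> (p \<in> k \<longleftrightarrow> q \<notin> k)"
  using assms unfolding separates_def by auto

lemma finite_walls: "finite M \<Longrightarrow> finite (walls m M)"
  by (rule finite_subset[of _ "Pow (Pow M)"]) (auto simp: walls_def)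

lemma finite_sep_walls: "finite M \<Longrightarrow> finite (sep_walls m M a b)"
  unfolding sep_walls_def using finite_walls by auto

lemma sep_walls_commute:
  assumes "a \<in> M" "b \<in> M"
  shows "sep_walls m M a b = sep_walls m M b a"
proof -
  have "separates W a b \<longleftrightarrow> separates W b a" if "W \<in> walls m M" for W
    using obtain_wall_side[OF that assms(1)] separates_wall_iff assms by metis
  then show ?thesis unfolding sep_walls_def by auto
qed

lemma sep_walls_refl: "sep_walls m M a a = {}"
  unfolding sep_walls_def separates_def by auto

lemma convex_inD: "convex_in m M k \<Longrightarrow> a \<in> k \<Longrightarrow> b \<in> k \<Longrightarrow> z \<in> M \<Longrightarrow> m a b z = z \<Longrightarrow> z \<in> k"
  unfolding convex_in_def median_interval_def by blast

lemma sep_walls_interval_split: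
  assumes a: "a \<in> M" and b: "b \<in> M" and c: "c \<in> M" and cab: "m a b c = c"
  shows "sep_walls m M a b = sep_walls m M a c \<union> sep_walls m M c b"
    and "sep_walls m M a c \<inter> sep_walls m M c b = {}"
proof -
  have "(separates W a b \<longleftrightarrow> separates W a c \<or> separates W c b)
      \<and> \<not> (separates W a c \<and> separates W c b)" if W: "W \<in> walls m M" for W
  proof -
    obtain k where k: "W = {k, M - k}" "a \<in> k" "k \<subseteq> M" "convex_in m M k"
      using obtain_wall_side[OF W a] by blast
    have "b \<in> k \<Longrightarrow> c \<in> k" using convex_inD[OF k(4) k(2) _ c cab] by blast
    then show ?thesis using separates_wall_iff[OF k(1) k(3)] a b c k(2) by auto
  qed
  then show "sep_walls m M a b = sep_walls m M a c \<union> sep_walls m M c b"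
    and "sep_walls m M a c \<inter> sep_walls m M c b = {}"
    unfolding sep_walls_def by auto
qed

lemma sep_walls_nonempty:
  assumes a: "a \<in> M" and b: "b \<in> M" and "a \<noteq> b"
  shows "sep_walls m M a b \<noteq> {}"
proof -
  obtain h where h: "halfspace h" "a \<in> h" "b \<notin> h" using halfspace_separation[OF \<open>a \<noteq> b\<close>] .
  have "convex_in m M (C \<inter> M)" if "med_convex C" for C
    using that unfolding convex_in_def by blast
  moreover have "M - h \<inter> M = - h \<inter> M" by blast
  ultimately have "convex_in m M (h \<inter> M)" "convex_in m M (M - h \<inter> M)"
    using h(1) unfolding halfspace_def by auto
  then have "{h \<inter> M, M - h \<inter> M} \<in> walls m M" unfolding walls_def using a b h by blast
  moreover have "separates {h \<inter> M, M - h \<inter> M} a b" unfolding separates_def using a b h by auto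
  ultimately show ?thesis unfolding sep_walls_def by auto
qed

lemma exists_interval_atom:
  assumes fin: "finite M" and a: "a \<in> M" and b: "b \<in> M" and "a \<noteq> b"
  obtains c where "c \<in> M" "m a b c = c" "c \<noteq> a" "{z \<in> M. m a c z = z} = {a, c}"
proof -
  define Cs where "Cs = {c \<in> M. m a b c = c \<and> c \<noteq> a}"
  define size where "size c = card {z \<in> M. m a c z = z}" for c
  have "b \<in> Cs" unfolding Cs_def using b \<open>a \<noteq> b\<close> med_majority3 by auto
  then obtain c where c: "c \<in> Cs" and least: "\<And>c'. c' \<in> Cs \<Longrightarrow> size c \<le> size c'"
    using ex_has_least_nat[of "\<lambda>c. c \<in> Cs" b size] by blast
  have cM: "c \<in> M" "m a b c = c" "c \<noteq> a" using c unfolding Cs_def by auto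
  have "{z \<in> M. m a c z = z} = {a, c}"
  proof (rule ccontr)
    assume "{z \<in> M. m a c z = z} \<noteq> {a, c}"
    moreover have "{a, c} \<subseteq> {z \<in> M. m a c z = z}" using a cM med_majority2 med_majority3 by auto
    ultimately obtain z where z: "z \<in> M" "m a c z = z" "z \<noteq> a" "z \<noteq> c" by auto
    have "z \<in> Cs" unfolding Cs_def using z interval_mono[OF cM(2) z(2)] by auto
    have "m a z c \<noteq> c" using interval_antisym z(2,4) med_swap12 med_rotate by metis
    then have "{w \<in> M. m a z w = w} \<subset> {w \<in> M. m a c w = w}"
      using interval_mono[OF z(2)] cM(1) med_majority3 by auto
    then have "size z < size c" unfolding size_def using fin by (auto intro: psubset_card_mono)
    with least[OF \<open>z \<in> Cs\<close>] show False by auto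
  qed
  then show ?thesis using that cM by blast
qed

text \<open>Two walls separating a from c would have sides that differ at some x; the
  projection m a c x of x to the interval must then be a point of the interval
  different from a and c.\<close>
lemma is_edge_if_interval_atom:
  assumes sub: "subalgebra m M" and a: "a \<in> M" and c: "c \<in> M" and "a \<noteq> c"
    and atom: "{z \<in> M. m a c z = z} = {a, c}"
  shows "is_edge m M a c"
proof -
  have no_crossing: False
    if k: "k \<subseteq> M" "a \<in> k" "c \<notin> k" "convex_in m M k"
      and k': "a \<in> k'" "c \<notin> k'" "convex_in m M (M - k')"
      and x: "x \<in> k" "x \<in> M" "x \<notin> k'" for k k' x
  proof -
    define p where "p = m a c x"
    have pM: "p \<in> M" unfolding p_def using sub a c x(2) unfolding subalgebra_def by auto
    then have "p = a \<or> p = c" using atom median_in_interval unfolding p_def by auto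
    moreover have "p \<in> k" using convex_inD[OF k(4) k(2) x(1) pM] median_in_interval med_swap23
      unfolding p_def by metis
    moreover have "p \<in> M - k'" using convex_inD[OF k'(3) _ _ pM, of c x] c k' x median_in_interval
      med_swap23 med_swap12 unfolding p_def by (metis Diff_iff)
    ultimately show False using k k' by auto
  qed
  have "W1 = W2" if W: "W1 \<in> sep_walls m M a c" "W2 \<in> sep_walls m M a c" for W1 W2
  proof -
    obtain h1 where h1: "W1 = {h1, M - h1}" "a \<in> h1" "h1 \<subseteq> M" "convex_in m M h1" "convex_in m M (M - h1)"
      using obtain_wall_side[of W1 M a] W(1) a unfolding sep_walls_def by blast
    obtain h2 where h2: "W2 = {h2, M - h2}" "a \<in> h2" "h2 \<subseteq> M" "convex_in m M h2" "convex_in m M (M - h2)"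
      using obtain_wall_side[of W2 M a] W(2) a unfolding sep_walls_def by blast
    have "c \<notin> h1" "c \<notin> h2"
      using W separates_wall_iff[OF h1(1) h1(3) a c] separates_wall_iff[OF h2(1) h2(3) a c] h1(2) h2(2)
      unfolding sep_walls_def by auto
    then have "h1 = h2" using no_crossing[of h1 h2] no_crossing[of h2 h1] h1 h2 by blast
    then show ?thesis using h1(1) h2(1) by simp
  qed
  then have "card (sep_walls m M a c) = 1"
    using sep_walls_nonempty[OF a c \<open>a \<noteq> c\<close>] by (metis is_singletonI' is_singleton_altdef)
  then show ?thesis unfolding is_edge_def using a c by simp
qed

lemma finite_subalgebra_edge_induct:
  assumes fin: "finite M" and sub: "subalgebra m M" and "a \<in> M" "b \<in> M"
    and target: "P b"
    and step: "\<And>a c. is_edge m M a c \<Longrightarrow> m a b c = c \<Longrightarrow> P c \<Longrightarrow> P a"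
  shows "P a"
  using \<open>a \<in> M\<close>
proof (induction "card {z \<in> M. m a b z = z}" arbitrary: a rule: less_induct)
  case less
  show ?case
  proof (cases "a = b")
    case True
    then show ?thesis using target by simp
  next
    case False
    obtain c where c: "c \<in> M" "m a b c = c" "c \<noteq> a" "{z \<in> M. m a c z = z} = {a, c}"
      using exists_interval_atom[OF fin less.prems \<open>b \<in> M\<close> False] by blast
    have "m c b z = z \<Longrightarrow> m a b z = z" for z
      using interval_mono[of b a c z] c(2) med_swap12 by metis
    moreover have "m c b a \<noteq> a" using interval_antisym[OF c(2)] c(3) by auto
    ultimately have "{z \<in> M. m c b z = z} \<subset> {z \<in> M. m a b z = z}"
      using less.prems med_majority2 by blast
    then have "card {z \<in> M. m c b z = z} < card {z \<in> M. m a b z = z}"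
      using fin by (auto intro: psubset_card_mono)
    then have "P c" using less.hyps c(1) by presburger
    moreover have "is_edge m M a c"
      using c(3,4) by (intro is_edge_if_interval_atom[OF sub less.prems c(1)]) auto
    ultimately show ?thesis using step c(2) by blast
  qed
qed

definition restrict_wall :: "'a set \<Rightarrow> 'a set set \<Rightarrow> 'a set set" where
  "restrict_wall M W = (\<lambda>h. h \<inter> M) ` W"

lemma restrict_wall_separates:
  assumes "M \<subseteq> M'" "W \<in> walls m M'" "a \<in> M" "b \<in> M" "separates W a b"
  shows "restrict_wall M W \<in> walls m M" "separates (restrict_wall M W) a b"
proof -
  obtain k where k: "W = {k, M' - k}" "a \<in> k" "k \<subseteq> M'" "convex_in m M' k" "convex_in m M' (M' - k)"
    using obtain_wall_side assms(1-3) by blast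
  have "b \<notin> k" using separates_wall_iff[OF k(1) k(3)] assms k(2) by auto
  have R: "restrict_wall M W = {k \<inter> M, M - k \<inter> M}"
    unfolding restrict_wall_def k(1) using assms(1) by auto
  have "convex_in m M (k \<inter> M)" using k(4) assms(1) unfolding convex_in_def by blast
  moreover have "M - k \<inter> M = (M' - k) \<inter> M" using assms(1) by auto
  then have "convex_in m M (M - k \<inter> M)" using k(5) assms(1) unfolding convex_in_def by blast
  ultimately show "restrict_wall M W \<in> walls m M"
    unfolding R walls_def using assms(3,4) k(2) \<open>b \<notin> k\<close> by blast
  show "separates (restrict_wall M W) a b"
    unfolding R separates_def using assms(3,4) k(2) \<open>b \<notin> k\<close> by auto
qed

lemma separates_of_restrict_wall:
  "x \<in> M \<Longrightarrow> y \<in> M \<Longrightarrow> separates (restrict_wall M W) x y \<Longrightarrow> separates W x y"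
  unfolding restrict_wall_def separates_def by auto

context
  fixes f :: "'a \<Rightarrow> 'a"
  assumes inj: "inj f" and hom: "\<And>x y z. f (m x y z) = m (f x) (f y) (f z)"
begin

lemma hom_interval_iff: "m (f a) (f b) (f w) = f w \<longleftrightarrow> m a b w = w"
  using hom inj by (metis injD)

lemma convex_in_image_iff:
  assumes "C \<subseteq> M"
  shows "convex_in m (f ` M) (f ` C) \<longleftrightarrow> convex_in m M C"
proof
  assume conv: "convex_in m (f ` M) (f ` C)"
  have "z \<in> C" if "a \<in> C" "b \<in> C" "m a b z = z" "z \<in> M" for a b z
  proof -
    have "f z \<in> f ` C"
      using conv that hom_interval_iff unfolding convex_in_def median_interval_def by blast
    then show ?thesis using inj_image_mem_iff[OF inj] by blast
  qed
  then show "convex_in m M C" unfolding convex_in_def median_interval_def using assms by blast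
next
  assume conv: "convex_in m M C"
  have "z \<in> f ` C"
    if ab: "a \<in> f ` C" "b \<in> f ` C" and z: "m a b z = z" "z \<in> f ` M" for a b z
  proof -
    obtain a' b' z' where "a' \<in> C" "b' \<in> C" "z' \<in> M" "a = f a'" "b = f b'" "z = f z'"
      using ab z(2) by blast
    then show ?thesis
      using conv z(1) hom_interval_iff unfolding convex_in_def median_interval_def by blast
  qed
  then show "convex_in m (f ` M) (f ` C)"
    unfolding convex_in_def median_interval_def using assms by blast
qed

lemma walls_image: "walls m (f ` M) = image (image f) ` walls m M"
proof (intro equalityI subsetI)
  fix W' assume "W' \<in> image (image f) ` walls m M"
  then obtain h where h: "W' = image f ` {h, M - h}" "h \<subseteq> M" "h \<noteq> {}" "M - h \<noteq> {}"
    "convex_in m M h" "convex_in m M (M - h)"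
    unfolding walls_def by blast
  have diff: "f ` (M - h) = f ` M - f ` h" by (rule image_set_diff[OF inj])
  have "W' = {f ` h, f ` M - f ` h}" using h(1) diff by simp
  moreover have "convex_in m (f ` M) (f ` h)" using convex_in_image_iff[OF h(2)] h(5) by simp
  moreover have "convex_in m (f ` M) (f ` M - f ` h)"
    using convex_in_image_iff[of "M - h" M] h(6) diff by simp
  moreover have "f ` h \<subseteq> f ` M" "f ` h \<noteq> {}" using h(2,3) by auto
  moreover have "f ` M - f ` h \<noteq> {}" using h(4) diff by (metis image_is_empty)
  ultimately show "W' \<in> walls m (f ` M)" unfolding walls_def by blast
next
  fix W' assume "W' \<in> walls m (f ` M)"
  then obtain h' where h': "W' = {h', f ` M - h'}" "h' \<subseteq> f ` M" "h' \<noteq> {}" "f ` M - h' \<noteq> {}"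
    "convex_in m (f ` M) h'" "convex_in m (f ` M) (f ` M - h')"
    unfolding walls_def by blast
  define h where "h = M \<inter> f -` h'"
  have hM: "h \<subseteq> M" unfolding h_def by blast
  have fh: "f ` h = h'" using h'(2) unfolding h_def by blast
  have diff: "f ` (M - h) = f ` M - h'" using image_set_diff[OF inj, of M h] fh by simp
  have "convex_in m M h" using convex_in_image_iff[OF hM] h'(5) fh by simp
  moreover have "convex_in m M (M - h)" using convex_in_image_iff[of "M - h" M] h'(6) diff by simp
  moreover have "h \<noteq> {}" "M - h \<noteq> {}" using h'(3,4) fh diff by auto
  ultimately have "{h, M - h} \<in> walls m M" unfolding walls_def using hM by blast
  moreover have "W' = image f ` {h, M - h}" using h'(1) fh diff by simp
  ultimately show "W' \<in> image (image f) ` walls m M" by blast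
qed

lemma sep_walls_image:
  "sep_walls m (f ` M) (f a) (f b) = image (image f) ` sep_walls m M a b"
proof -
  have "separates (image f ` W) (f a) (f b) \<longleftrightarrow> separates W a b" for W
    unfolding separates_def using inj_image_mem_iff[OF inj] by auto
  then show ?thesis unfolding sep_walls_def walls_image by auto
qed

lemma is_edge_image_iff: "is_edge m (f ` M) (f a) (f b) \<longleftrightarrow> is_edge m M a b"
  unfolding is_edge_def sep_walls_image using inj_image[OF inj_image[OF inj]] inj_image_mem_iff[OF inj]
  by (simp add: card_image inj_on_subset)

end

end

locale metric_median_alg = median_alg m for m :: "'a \<Rightarrow> 'a \<Rightarrow> 'a \<Rightarrow> 'a" +
  fixes d :: "'a \<Rightarrow> 'a \<Rightarrow> real"
  assumes metric: "Metric_space UNIV d"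
begin

lemma d_nonneg: "0 \<le> d x y"
  using Metric_space.nonneg[OF metric] .

lemma d_triangle: "d x z \<le> d x y + d y z"
  using Metric_space.triangle[OF metric] by blast

lemma d_eq_0_iff: "d x y = 0 \<longleftrightarrow> x = y"
  using Metric_space.zero[OF metric] by blast

lemma finite_edge_lengths:
  "finite M \<Longrightarrow> finite {d a b | a b. is_edge m M a b \<and> W \<in> sep_walls m M a b}"
  by (rule finite_subset[of _ "(\<lambda>(a, b). d a b) ` (M \<times> M)"]) (auto simp: is_edge_def)

lemma edge_le_lambda_max:
  assumes "finite M" "is_edge m M a b" "W \<in> sep_walls m M a b"
  shows "d a b \<le> lambda_max d m M W"
  unfolding lambda_max_def using assms finite_edge_lengths[OF assms(1)] by (auto intro!: Max_ge)

lemma d_le_sum_lambda_max: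
  assumes fin: "finite M" and sub: "subalgebra m M" and "a \<in> M" "b \<in> M"
  shows "d a b \<le> (\<Sum>W\<in>sep_walls m M a b. lambda_max d m M W)"
  using fin sub \<open>a \<in> M\<close> \<open>b \<in> M\<close>
proof (rule finite_subalgebra_edge_induct)
  show "d b b \<le> (\<Sum>W\<in>sep_walls m M b b. lambda_max d m M W)"
    using d_eq_0_iff[of b b] by (simp add: sep_walls_refl)
next
  fix a c
  assume edge: "is_edge m M a c" and cab: "m a b c = c"
    and IH: "d c b \<le> (\<Sum>W\<in>sep_walls m M c b. lambda_max d m M W)"
  obtain W0 where W0: "sep_walls m M a c = {W0}"
    using edge card_1_singletonE unfolding is_edge_def by blast
  have "a \<in> M" "c \<in> M" using edge unfolding is_edge_def by auto
  then have "(\<Sum>W\<in>sep_walls m M a b. lambda_max d m M W)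
      = lambda_max d m M W0 + (\<Sum>W\<in>sep_walls m M c b. lambda_max d m M W)"
    using sep_walls_interval_split[OF _ \<open>b \<in> M\<close> _ cab] W0 finite_sep_walls[OF fin]
    by (simp add: sum.union_disjoint)
  moreover have "d a c \<le> lambda_max d m M W0" using edge_le_lambda_max[OF fin edge] W0 by auto
  ultimately show "d a b \<le> (\<Sum>W\<in>sep_walls m M a b. lambda_max d m M W)"
    using d_triangle[of a b c] IH by linarith
qed

lemma wall_crossed_by_edge:
  assumes fin: "finite M" and sub: "subalgebra m M" and W: "W \<in> walls m M"
  obtains a b where "is_edge m M a b" "W \<in> sep_walls m M a b"
proof -
  obtain k where k: "W = {k, M - k}" "k \<subseteq> M" "k \<noteq> {}" "M - k \<noteq> {}"
    using W unfolding walls_def by blast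
  obtain a b where ab: "a \<in> k" "b \<in> M - k" using k by blast
  have "a \<in> k \<longrightarrow> (\<exists>a b. is_edge m M a b \<and> W \<in> sep_walls m M a b)"
  proof (rule finite_subalgebra_edge_induct[OF fin sub, where b = b])
    show "a \<in> M" "b \<in> M" using ab k by auto
    show "b \<in> k \<longrightarrow> (\<exists>a b. is_edge m M a b \<and> W \<in> sep_walls m M a b)" using ab by auto
  next
    fix a c
    assume edge: "is_edge m M a c"
      and IH: "c \<in> k \<longrightarrow> (\<exists>a b. is_edge m M a b \<and> W \<in> sep_walls m M a b)"
    have "a \<in> k \<Longrightarrow> c \<notin> k \<Longrightarrow> W \<in> sep_walls m M a c"
      using edge W k(1,2) unfolding is_edge_def sep_walls_def separates_def by auto
    then show "a \<in> k \<longrightarrow> (\<exists>a b. is_edge m M a b \<and> W \<in> sep_walls m M a b)"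
      using edge IH by blast
  qed
  then show ?thesis using that ab by blast
qed

lemma lambda_max_attained:
  assumes fin: "finite M" and sub: "subalgebra m M" and W: "W \<in> walls m M"
  obtains a b where "is_edge m M a b" "W \<in> sep_walls m M a b" "lambda_max d m M W = d a b"
proof -
  let ?S = "{d a b | a b. is_edge m M a b \<and> W \<in> sep_walls m M a b}"
  have "?S \<noteq> {}" using wall_crossed_by_edge[OF assms] by blast
  then have "lambda_max d m M W \<in> ?S"
    unfolding lambda_max_def using finite_edge_lengths[OF fin] Max_in by blast
  then show ?thesis using that by blast
qed

lemma lambda_max_nonneg:
  "finite M \<Longrightarrow> subalgebra m M \<Longrightarrow> W \<in> walls m M \<Longrightarrow> 0 \<le> lambda_max d m M W"
  using lambda_max_attained d_nonneg by metis

lemma d_mu_M_nonneg: "finite M \<Longrightarrow> subalgebra m M \<Longrightarrow> 0 \<le> d_mu_M d m M x y"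
  unfolding d_mu_M_def sep_walls_def using lambda_max_nonneg by (auto intro: sum_nonneg)

lemma d_mu_M_interval_split:
  assumes "finite M" "x \<in> M" "y \<in> M" "c \<in> M" "m x y c = c"
  shows "d_mu_M d m M x y = d_mu_M d m M x c + d_mu_M d m M c y"
  unfolding d_mu_M_def
  using assms sep_walls_interval_split[OF assms(2-5)] finite_sep_walls[OF assms(1)]
  by (simp add: sum.union_disjoint)

lemma d_mu_M_commute: "d_mu_M d m M x y = d_mu_M d m M y x"
  unfolding d_mu_M_def using sep_walls_commute by auto

lemma d_mu_M_refl: "d_mu_M d m M x x = 0"
  unfolding d_mu_M_def by (simp add: sep_walls_refl)

lemma d_le_d_mu_M:
  "finite M \<Longrightarrow> subalgebra m M \<Longrightarrow> x \<in> M \<Longrightarrow> y \<in> M \<Longrightarrow> d x y \<le> d_mu_M d m M x y"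
  unfolding d_mu_M_def using d_le_sum_lambda_max by auto

text \<open>An edge of M crosses a unique wall of M, so every wall of M' separating its ends
  restricts to that wall; hence the length of the edge is paid for by those walls of M'.\<close>
lemma lambda_max_le_sum_restricting:
  assumes fin: "finite M" "subalgebra m M" and fin': "finite M'" "subalgebra m M'"
    and "M \<subseteq> M'" "x \<in> M" "y \<in> M" and W: "W \<in> sep_walls m M x y"
  shows "lambda_max d m M W
    \<le> (\<Sum>W'\<in>{W' \<in> sep_walls m M' x y. restrict_wall M W' = W}. lambda_max d m M' W')"
proof -
  obtain a b where edge: "is_edge m M a b" "W \<in> sep_walls m M a b" "lambda_max d m M W = d a b"
    using lambda_max_attained[OF fin] W unfolding sep_walls_def by blast
  then have ab: "a \<in> M" "b \<in> M" unfolding is_edge_def by auto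
  have crossing: "sep_walls m M' a b \<subseteq> {W' \<in> sep_walls m M' x y. restrict_wall M W' = W}"
  proof
    fix W' assume W': "W' \<in> sep_walls m M' a b"
    then have "restrict_wall M W' \<in> sep_walls m M a b"
      using restrict_wall_separates[OF \<open>M \<subseteq> M'\<close> _ ab] unfolding sep_walls_def by auto
    then have eq: "restrict_wall M W' = W"
      using edge(1,2) unfolding is_edge_def by (metis card_1_singletonE singletonD)
    then have "separates W' x y"
      using W separates_of_restrict_wall[OF \<open>x \<in> M\<close> \<open>y \<in> M\<close>] unfolding sep_walls_def by auto
    then show "W' \<in> {W' \<in> sep_walls m M' x y. restrict_wall M W' = W}"
      using W' eq unfolding sep_walls_def by auto
  qed
  have "(\<Sum>W'\<in>sep_walls m M' a b. lambda_max d m M' W')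
      \<le> (\<Sum>W'\<in>{W' \<in> sep_walls m M' x y. restrict_wall M W' = W}. lambda_max d m M' W')"
  proof (rule sum_mono2)
    show "finite {W' \<in> sep_walls m M' x y. restrict_wall M W' = W}"
      using finite_sep_walls[OF fin'(1)] by simp
    show "sep_walls m M' a b \<subseteq> {W' \<in> sep_walls m M' x y. restrict_wall M W' = W}"
      by (rule crossing)
    show "0 \<le> lambda_max d m M' W'" if "W' \<in> {W' \<in> sep_walls m M' x y. restrict_wall M W' = W} - sep_walls m M' a b" for W'
      using that lambda_max_nonneg[OF fin'] unfolding sep_walls_def by blast
  qed
  moreover have "d a b \<le> (\<Sum>W'\<in>sep_walls m M' a b. lambda_max d m M' W')"
    using d_le_sum_lambda_max[OF fin'] ab \<open>M \<subseteq> M'\<close> by blast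
  ultimately show ?thesis using edge(3) by linarith
qed

lemma d_mu_M_mono:
  assumes fin: "finite M" "subalgebra m M" and fin': "finite M'" "subalgebra m M'"
    and "M \<subseteq> M'"
  shows "d_mu_M d m M x y \<le> d_mu_M d m M' x y"
proof (cases "x \<in> M \<and> y \<in> M")
  case True
  then have "d_mu_M d m M x y = (\<Sum>W\<in>sep_walls m M x y. lambda_max d m M W)"
    unfolding d_mu_M_def by simp
  also have "\<dots> \<le> (\<Sum>W\<in>sep_walls m M x y.
      \<Sum>W'\<in>{W' \<in> sep_walls m M' x y. restrict_wall M W' = W}. lambda_max d m M' W')"
    using lambda_max_le_sum_restricting[OF assms] True by (intro sum_mono) auto
  also have "\<dots> = (\<Sum>W'\<in>sep_walls m M' x y. lambda_max d m M' W')"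
    using finite_sep_walls fin fin' restrict_wall_separates[OF \<open>M \<subseteq> M'\<close>] True
    by (intro sum.group) (auto simp: sep_walls_def)
  also have "\<dots> = d_mu_M d m M' x y"
    unfolding d_mu_M_def using True \<open>M \<subseteq> M'\<close> by auto
  finally show ?thesis .
next
  case False
  then have "d_mu_M d m M x y = 0" unfolding d_mu_M_def by auto
  then show ?thesis using d_mu_M_nonneg[OF fin'] by simp
qed

lemma d_mu_M_le_d_mu: "finite M \<Longrightarrow> subalgebra m M \<Longrightarrow> ereal (d_mu_M d m M x y) \<le> d_mu d m x y"
  unfolding d_mu_def by (rule SUP_upper) simp

lemma d_mu_le:
  "(\<And>M. finite M \<Longrightarrow> subalgebra m M \<Longrightarrow> ereal (d_mu_M d m M x y) \<le> c) \<Longrightarrow> d_mu d m x y \<le> c"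
  unfolding d_mu_def by (rule SUP_least) auto

lemma d_mu_nonneg: "0 \<le> d_mu d m x y"
proof -
  have "subalgebra m {}" unfolding subalgebra_def by simp
  then show ?thesis
    using d_mu_M_le_d_mu[of "{}" x y] unfolding d_mu_M_def by (simp add: zero_ereal_def)
qed

lemma d_le_d_mu: "d x y \<le> d_mu d m x y"
proof -
  let ?M = "median_hull {x, y}"
  have "finite ?M" "subalgebra m ?M" "x \<in> ?M" "y \<in> ?M"
    using finite_median_hull subalgebra_median_hull subset_median_hull[of "{x, y}"] by auto
  then show ?thesis
    using d_le_d_mu_M d_mu_M_le_d_mu by (meson ereal_less_eq(3) order_trans)
qed

context
  fixes f :: "'a \<Rightarrow> 'a"
  assumes aut: "isometric_automorphism d m f"
begin

lemma lambda_max_image: "lambda_max d m (f ` M) (image f ` W) = lambda_max d m M W"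
proof -
  have inj: "inj f" and hom: "\<And>x y z. f (m x y z) = m (f x) (f y) (f z)"
    and iso: "\<And>x y. d (f x) (f y) = d x y"
    using aut unfolding isometric_automorphism_def by (auto simp: bij_is_inj)
  have mem: "image f ` W \<in> image (image f) ` S \<longleftrightarrow> W \<in> S" for S
    using inj_image_mem_iff[OF inj_image[OF inj_image[OF inj]]] .
  have edge_iff: "is_edge m (f ` M) a' b' \<and> image f ` W \<in> sep_walls m (f ` M) a' b'
      \<longleftrightarrow> (\<exists>a b. a' = f a \<and> b' = f b \<and> is_edge m M a b \<and> W \<in> sep_walls m M a b)" for a' b'
  proof
    assume edge: "is_edge m (f ` M) a' b' \<and> image f ` W \<in> sep_walls m (f ` M) a' b'"
    then obtain a b where "a' = f a" "b' = f b" unfolding is_edge_def by blast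
    then show "\<exists>a b. a' = f a \<and> b' = f b \<and> is_edge m M a b \<and> W \<in> sep_walls m M a b"
      using edge is_edge_image_iff[OF inj hom] sep_walls_image[OF inj hom] mem by auto
  qed (use is_edge_image_iff[OF inj hom] sep_walls_image[OF inj hom] mem in auto)
  have "{d a b | a b. is_edge m (f ` M) a b \<and> image f ` W \<in> sep_walls m (f ` M) a b}
      = {d (f a) (f b) | a b. is_edge m M a b \<and> W \<in> sep_walls m M a b}"
    unfolding edge_iff by blast
  then show ?thesis unfolding lambda_max_def iso by simp
qed

lemma d_mu_M_image: "d_mu_M d m (f ` M) (f x) (f y) = d_mu_M d m M x y"
proof -
  have inj: "inj f" and hom: "\<And>x y z. f (m x y z) = m (f x) (f y) (f z)"
    using aut unfolding isometric_automorphism_def by (auto simp: bij_is_inj)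
  have "(\<Sum>W'\<in>image (image f) ` sep_walls m M x y. lambda_max d m (f ` M) W')
      = (\<Sum>W\<in>sep_walls m M x y. lambda_max d m M W)"
    using inj_image[OF inj_image[OF inj]]
    by (simp add: sum.reindex inj_on_subset lambda_max_image)
  then show ?thesis
    unfolding d_mu_M_def sep_walls_image[OF inj hom] by (simp add: inj_image_mem_iff[OF inj])
qed

lemma finite_subalgebras_image:
  "image f ` {M. finite M \<and> subalgebra m M} = {M. finite M \<and> subalgebra m M}"
proof -
  have bij: "bij f" and hom: "\<And>x y z. f (m x y z) = m (f x) (f y) (f z)"
    using aut unfolding isometric_automorphism_def by auto
  have sub_iff: "subalgebra m (f ` M) \<longleftrightarrow> subalgebra m M" for M
    unfolding subalgebra_def using bij_is_inj[OF bij]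
    by (auto simp flip: hom simp: inj_image_mem_iff)
  have fin_iff: "finite (f ` M) \<longleftrightarrow> finite M" for M
    using bij_is_inj[OF bij] by (simp add: finite_image_iff inj_on_subset)
  have "M' \<in> image f ` {M. finite M \<and> subalgebra m M}"
    if "finite M'" "subalgebra m M'" for M'
  proof -
    have "f ` (f -` M') = M'" using bij_is_surj[OF bij] by (rule surj_image_vimage_eq)
    then show ?thesis using that sub_iff[of "f -` M'"] fin_iff[of "f -` M'"] by (metis image_eqI mem_Collect_eq)
  qed
  then show ?thesis using sub_iff fin_iff by auto
qed

lemma d_mu_image: "d_mu d m (f x) (f y) = d_mu d m x y"
proof -
  have "d_mu d m (f x) (f y)
      = (SUP M \<in> image f ` {M. finite M \<and> subalgebra m M}. ereal (d_mu_M d m M (f x) (f y)))"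
    unfolding d_mu_def finite_subalgebras_image ..
  also have "\<dots> = d_mu d m x y" unfolding d_mu_def by (simp add: image_comp d_mu_M_image)
  finally show ?thesis .
qed

end

end

locale rectifiable_median_alg = metric_median_alg m d
  for m :: "'a \<Rightarrow> 'a \<Rightarrow> 'a \<Rightarrow> 'a" and d :: "'a \<Rightarrow> 'a \<Rightarrow> real" +
  assumes rectifiable: "rectifiable d m"
begin

definition dist_mu :: "'a \<Rightarrow> 'a \<Rightarrow> real" where
  "dist_mu x y = real_of_ereal (d_mu d m x y)"

lemma d_mu_eq_dist_mu: "d_mu d m x y = ereal (dist_mu x y)"
  unfolding dist_mu_def using rectifiable d_mu_nonneg[of x y]
  unfolding rectifiable_def by (cases "d_mu d m x y") auto

lemma d_mu_M_le_dist_mu: "finite M \<Longrightarrow> subalgebra m M \<Longrightarrow> d_mu_M d m M x y \<le> dist_mu x y"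
  using d_mu_M_le_d_mu d_mu_eq_dist_mu by (metis ereal_less_eq(3))

lemma dist_mu_le:
  "(\<And>M. finite M \<Longrightarrow> subalgebra m M \<Longrightarrow> d_mu_M d m M x y \<le> c) \<Longrightarrow> dist_mu x y \<le> c"
  using d_mu_le[of x y "ereal c"] d_mu_eq_dist_mu by simp

lemma dist_mu_nonneg: "0 \<le> dist_mu x y"
  using d_mu_nonneg d_mu_eq_dist_mu by (metis ereal_less_eq(5))

lemma d_le_dist_mu: "d x y \<le> dist_mu x y"
  using d_le_d_mu d_mu_eq_dist_mu by (metis ereal_less_eq(3))

lemma dist_mu_commute: "dist_mu x y = dist_mu y x"
  unfolding dist_mu_def d_mu_def using d_mu_M_commute by metis

lemma dist_mu_refl: "dist_mu x x = 0"
  using dist_mu_le[of x x 0] d_mu_M_refl dist_mu_nonneg[of x x] by auto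

lemma dist_mu_eq_0_iff: "dist_mu x y = 0 \<longleftrightarrow> x = y"
  using d_le_dist_mu[of x y] d_nonneg[of x y] d_eq_0_iff[of x y] dist_mu_refl by force

text \<open>Both inequalities are checked in the subalgebra generated by the finite subalgebras
  involved together with x, y and c, using monotonicity and additivity of d_mu_M there.\<close>
lemma dist_mu_interval_split:
  assumes cxy: "m x y c = c"
  shows "dist_mu x y = dist_mu x c + dist_mu c y"
proof -
  have hull: "finite (median_hull S)" "subalgebra m (median_hull S)" "S \<subseteq> median_hull S"
    if "finite S" for S
    using finite_median_hull[OF that] subalgebra_median_hull subset_median_hull by auto
  have below: "d_mu_M d m M1 x c + d_mu_M d m M2 c y \<le> dist_mu x y"
    if "finite M1" "subalgebra m M1" "finite M2" "subalgebra m M2" for M1 M2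
  proof -
    let ?M = "median_hull (M1 \<union> M2 \<union> {x, y, c})"
    have M: "finite ?M" "subalgebra m ?M" "M1 \<union> M2 \<union> {x, y, c} \<subseteq> ?M"
      using hull[of "M1 \<union> M2 \<union> {x, y, c}"] that by auto
    have "d_mu_M d m M1 x c + d_mu_M d m M2 c y \<le> d_mu_M d m ?M x c + d_mu_M d m ?M c y"
      using d_mu_M_mono[OF that(1,2) M(1,2)] d_mu_M_mono[OF that(3,4) M(1,2)] M(3)
      by (meson add_mono le_sup_iff)
    also have "\<dots> = d_mu_M d m ?M x y" using d_mu_M_interval_split[OF M(1) _ _ _ cxy] M(3) by auto
    finally show ?thesis using d_mu_M_le_dist_mu[OF M(1,2), of x y] by linarith
  qed
  have "dist_mu x c \<le> dist_mu x y - d_mu_M d m M2 c y"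
    if "finite M2" "subalgebra m M2" for M2
    using below that by (intro dist_mu_le) (auto simp: algebra_simps)
  then have "dist_mu c y \<le> dist_mu x y - dist_mu x c"
    by (intro dist_mu_le) (auto simp: algebra_simps)
  moreover have "dist_mu x y \<le> dist_mu x c + dist_mu c y"
  proof (rule dist_mu_le)
    fix M assume M: "finite M" "subalgebra m M"
    let ?M = "median_hull (M \<union> {c})"
    have M': "finite ?M" "subalgebra m ?M" "M \<union> {c} \<subseteq> ?M" using hull[of "M \<union> {c}"] M by auto
    show "d_mu_M d m M x y \<le> dist_mu x c + dist_mu c y"
    proof (cases "x \<in> M \<and> y \<in> M")
      case True
      then have "x \<in> ?M" "y \<in> ?M" "c \<in> ?M" using M'(3) by auto
      then have "d_mu_M d m M x y \<le> d_mu_M d m ?M x c + d_mu_M d m ?M c y"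
        using d_mu_M_mono[OF M M'(1,2), of x y] d_mu_M_interval_split[OF M'(1) _ _ _ cxy] M'(3) by simp
      then show ?thesis using d_mu_M_le_dist_mu[OF M'(1,2)] by (meson add_mono order_trans)
    next
      case False
      then have "d_mu_M d m M x y = 0" unfolding d_mu_M_def by auto
      then show ?thesis using dist_mu_nonneg[of x c] dist_mu_nonneg[of c y] by simp
    qed
  qed
  ultimately show ?thesis by linarith
qed

lemma dist_mu_triangle: "dist_mu x z \<le> dist_mu x y + dist_mu y z"
proof -
  define p where "p = m x y z"
  have "dist_mu x z = dist_mu x p + dist_mu p z"
    using dist_mu_interval_split[of x z p] median_in_interval med_swap23 med_rotate
    unfolding p_def by metis
  moreover have "dist_mu x y = dist_mu x p + dist_mu p y"
    using dist_mu_interval_split[of x y p] median_in_interval unfolding p_def by metis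
  moreover have "dist_mu y z = dist_mu y p + dist_mu p z"
    using dist_mu_interval_split[of y z p] median_in_interval med_rotate unfolding p_def by metis
  ultimately show ?thesis using dist_mu_nonneg[of p y] dist_mu_nonneg[of y p] by linarith
qed

lemma metric_dist_mu: "Metric_space UNIV dist_mu"
  by (rule Metric_space.intro) (simp_all add: dist_mu_nonneg dist_mu_commute dist_mu_eq_0_iff dist_mu_triangle)

lemma geod_between_iff_interval: "geod_between dist_mu a z b \<longleftrightarrow> m a b z = z"
proof
  assume "m a b z = z"
  then show "geod_between dist_mu a z b" unfolding geod_between_def using dist_mu_interval_split by auto
next
  assume between: "geod_between dist_mu a z b"
  define p where "p = m a b z"
  have "dist_mu a b = dist_mu a p + dist_mu p b"
    using dist_mu_interval_split[of a b p] median_in_interval unfolding p_def by metis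
  moreover have "dist_mu a z = dist_mu a p + dist_mu p z"
    using dist_mu_interval_split[of a z p] median_in_interval med_swap23 med_swap12
    unfolding p_def by metis
  moreover have "dist_mu z b = dist_mu z p + dist_mu p b"
    using dist_mu_interval_split[of z b p] median_in_interval med_swap23 med_rotate med_swap12
    unfolding p_def by metis
  ultimately have "dist_mu p z = 0"
    using between dist_mu_commute[of z p] unfolding geod_between_def by linarith
  then show "m a b z = z" using dist_mu_eq_0_iff unfolding p_def by auto
qed

lemma median_set_dist_mu: "median_set dist_mu x1 x2 x3 = {m x1 x2 x3}"
proof -
  have "m x1 x2 z = z \<and> m x2 x3 z = z \<and> m x3 x1 z = z \<longleftrightarrow> z = m x1 x2 x3" for z
  proof
    assume "m x1 x2 z = z \<and> m x2 x3 z = z \<and> m x3 x1 z = z"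
    then show "z = m x1 x2 x3"
      using median_unique_in_intervals[of x1 x2 z x3] med_swap12[of x3 x1 z] by simp
  next
    assume "z = m x1 x2 x3"
    then show "m x1 x2 z = z \<and> m x2 x3 z = z \<and> m x3 x1 z = z"
      using median_in_interval[of x1 x2 x3] median_in_interval[of x2 x3 x1]
        median_in_interval[of x3 x1 x2] med_rotate by metis
  qed
  then show ?thesis unfolding median_set_def geod_between_iff_interval by auto
qed

lemma median_metric_dist_mu: "median_metric dist_mu"
  unfolding median_metric_def using metric_dist_mu median_set_dist_mu by blast

lemma intrinsic_median_dist_mu: "intrinsic_median dist_mu x y z = m x y z"
  unfolding intrinsic_median_def median_set_dist_mu by simp

lemma dist_mu_bi_lipschitz:
  assumes "uniformly_rectifiable d m"
  obtains C where "C > 0" "\<And>x y. d x y \<le> dist_mu x y \<and> dist_mu x y \<le> C * d x y"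
proof -
  obtain L :: real where L: "L \<ge> 0" "\<And>x y. d_mu d m x y \<le> ereal (L * d x y)"
    using assms unfolding uniformly_rectifiable_def by auto
  have "dist_mu x y \<le> (L + 1) * d x y" for x y
    using L(2)[of x y] d_nonneg[of x y] unfolding d_mu_eq_dist_mu
    by (simp add: algebra_simps add_increasing2)
  then show ?thesis using that[of "L + 1"] L(1) d_le_dist_mu by auto
qed

end

theorem proposition3p3:
  fixes d :: "'a \<Rightarrow> 'a \<Rightarrow> real" and \<mu> :: "'a \<Rightarrow> 'a \<Rightarrow> 'a \<Rightarrow> 'a"
  assumes "metric_median_algebra d \<mu>"
    and "rectifiable d \<mu>"
  shows "median_metric (\<lambda>x y. real_of_ereal (d_mu d \<mu> x y))
    \<and> (\<forall>f. isometric_automorphism d \<mu> f \<longrightarrow>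
           (\<forall>x y. d_mu d \<mu> (f x) (f y) = d_mu d \<mu> x y))
    \<and> (\<forall>x y z. intrinsic_median (\<lambda>x y. real_of_ereal (d_mu d \<mu> x y)) x y z = \<mu> x y z)
    \<and> (uniformly_rectifiable d \<mu> \<longrightarrow>
        (\<exists>c C::real. c > 0 \<and> C > 0 \<and>
           (\<forall>x y. c * d x y \<le> real_of_ereal (d_mu d \<mu> x y)
                 \<and> real_of_ereal (d_mu d \<mu> x y) \<le> C * d x y)))"
proof -
  interpret rectifiable_median_alg \<mu> d
    using assms
    by (simp add: rectifiable_median_alg_def rectifiable_median_alg_axioms_def metric_median_alg_def
        metric_median_alg_axioms_def median_alg_def metric_median_algebra_def)
  have "\<exists>c C::real. c > 0 \<and> C > 0 \<and> (\<forall>x y. c * d x y \<le> dist_mu x y \<and> dist_mu x y \<le> C * d x y)"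
    if uniform: "uniformly_rectifiable d \<mu>"
  proof -
    obtain C where "C > 0" "\<And>x y. d x y \<le> dist_mu x y \<and> dist_mu x y \<le> C * d x y"
      using dist_mu_bi_lipschitz[OF uniform] by blast
    then show ?thesis by (intro exI[of _ 1] exI[of _ C]) auto
  qed
  then show ?thesis
    unfolding dist_mu_def[symmetric] using median_metric_dist_mu d_mu_image intrinsic_median_dist_mu by blast
qed

end
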